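(* Let $A,B$ be real symmetric $n\times n$ matrices with spectral decompositions $A=\sum_i\lambda_iv_iv_i^\top$ and $B=\sum_j\mu_jw_jw_j^\top$, suppose $\|A\|\le2.5$, and let $\eta>0$. Then the matrix $X=\sum_{i,j}\frac{\eta}{(\lambda_i-\mu_j)^2+\eta^2}v_iv_i^\top\mathbf Jw_jw_j^\top$ satisfies $$X=\frac1{2\pi}\operatorname{Re}\oint_\Gamma R_A(z)\mathbf JR_B(z+\mathbf i\eta)\,dz,$$ where $\Gamma$ is the boundary of the rectangle with vertices $\pm3\pm\mathbf i\eta/2$, traversed counterclockwise.
   Context: $\mathbf J$ is the $n\times n$ all-ones matrix, $\|\cdot\|$ the spectral norm, $\mathbf i=\sqrt{-1}$. For a real symmetric matrix $M$ and $z\in\mathbb C$ not an eigenvalue of $M$, $R_M(z)=(M-z\mathbf I)^{-1}$ is the resolvent. The real part and the integral are taken entrywise. *)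

theory Defs
  imports "HOL-Complex_Analysis.Complex_Analysis"
begin

definition outer :: "real^'n \<Rightarrow> real^'n \<Rightarrow> real^'n^'n" where
  "outer u w = (\<chi> a b. u $ a * w $ b)"

definition onesM :: "'a::one^'n^'n" where
  "onesM = (\<chi> a b. 1)"

definition cmat :: "real^'n^'n \<Rightarrow> complex^'n^'n" where
  "cmat M = (\<chi> a b. complex_of_real (M $ a $ b))"

definition resolvent :: "real^'n^'n \<Rightarrow> complex \<Rightarrow> complex^'n^'n" where
  "resolvent M z = matrix_inv (cmat M - mat z)"

definition rect_contour :: "real \<Rightarrow> real \<Rightarrow> complex" where
  "rect_contour eta =
     linepath (Complex 3 (-eta/2)) (Complex 3 (eta/2)) +++
     linepath (Complex 3 (eta/2)) (Complex (-3) (eta/2)) +++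
     linepath (Complex (-3) (eta/2)) (Complex (-3) (-eta/2)) +++
     linepath (Complex (-3) (-eta/2)) (Complex 3 (-eta/2))"

end

theory Submission
  imports Defs
begin

text \<open>
  By the spectral decompositions, R_A(z) = \<Sum>_i v_i v_i^T / (\<lambda>_i - z) and
  R_B(z + i\<eta>) = \<Sum>_j w_j w_j^T / (\<mu>_j - z - i\<eta>), so every entry of the integrand is a real
  combination of the scalar functions 1 / ((\<lambda>_i - z)(\<mu>_j - z - i\<eta>)). Since
  |\<lambda>_i| \<le> \<parallel>A\<parallel> < 3, the pole \<lambda>_i lies inside the rectangle, whereas \<mu>_j - i\<eta> lies below it.
  Cauchy's integral formula gives 2\<pi>i / (\<lambda>_i - \<mu>_j + i\<eta>), whose real part is
  2\<pi>\<eta> / ((\<lambda>_i - \<mu>_j)^2 + \<eta>^2).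
\<close>

lemma sum_mult_swap:
  "(\<Sum>c\<in>C. (\<Sum>i\<in>I. f i c) * g c) = (\<Sum>i\<in>I. \<Sum>c\<in>C. f i c * g c :: 'a::comm_semiring_0)"
  unfolding sum_distrib_right by (rule sum.swap)

lemma sum_mult_sum_swap:
  "(\<Sum>c\<in>C. (\<Sum>i\<in>I. f i c) * (\<Sum>k\<in>K. g k c))
    = (\<Sum>i\<in>I. \<Sum>k\<in>K. \<Sum>c\<in>C. f i c * g k c :: 'a::comm_semiring_0)"
  unfolding sum_product by (rule trans[OF sum.swap sum.cong[OF refl sum.swap]])

text \<open>With \<open>\<alpha> = f \<circ> lam\<close>, \<open>spectral_matrix \<alpha> v\<close> is the functional calculus f(A) of
  A = \<Sum>_i lam_i v_i v_i^T.\<close>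

definition spectral_matrix :: "('n::finite \<Rightarrow> complex) \<Rightarrow> ('n \<Rightarrow> real^'n) \<Rightarrow> complex^'n^'n" where
  "spectral_matrix \<alpha> v = (\<chi> a b. \<Sum>i\<in>UNIV. \<alpha> i * of_real (v i $ a * v i $ b))"

lemma orthonormal_completeness:
  fixes v :: "'n::finite \<Rightarrow> real^'n"
  assumes orth: "\<And>i j. v i \<bullet> v j = (if i = j then 1 else 0)"
  shows "(\<Sum>i\<in>UNIV. v i $ a * v i $ b) = (if a = b then 1 else 0)"
proof -
  define V :: "real^'n^'n" where "V = (\<chi> i c. v i $ c)"
  \<comment> \<open>The rows of V are orthonormal; a one-sided inverse of a square matrix is two-sided,
    so its columns are orthonormal too.\<close>
  have "V ** transpose V = mat 1"
    using orth by (simp add: V_def matrix_matrix_mult_def transpose_def mat_def vec_eq_iff inner_vec_def)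
  then have "transpose V ** V = mat 1"
    by (simp add: matrix_left_right_inverse)
  then have "(transpose V ** V) $ a $ b = mat 1 $ a $ b"
    by simp
  then show ?thesis
    by (simp add: V_def matrix_matrix_mult_def transpose_def mat_def)
qed

lemma spectral_matrix_const:
  fixes v :: "'n::finite \<Rightarrow> real^'n"
  assumes orth: "\<And>i j. v i \<bullet> v j = (if i = j then 1 else 0)"
  shows "spectral_matrix (\<lambda>i. c) v = mat c"
proof -
  have "(\<Sum>i\<in>UNIV. c * of_real (v i $ a * v i $ b)) = c * of_real (\<Sum>i\<in>UNIV. v i $ a * v i $ b)" for a b
    by (simp only: of_real_sum sum_distrib_left)
  then show ?thesis
    by (simp add: spectral_matrix_def mat_def vec_eq_iff orthonormal_completeness[OF orth] del: of_real_mult)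
qed

lemma spectral_matrix_diff:
  "spectral_matrix \<alpha> v - spectral_matrix \<beta> v = spectral_matrix (\<lambda>i. \<alpha> i - \<beta> i) v"
  by (simp add: spectral_matrix_def vec_eq_iff sum_subtractf left_diff_distrib)

lemma spectral_matrix_mult:
  fixes v :: "'n::finite \<Rightarrow> real^'n"
  assumes orth: "\<And>i j. v i \<bullet> v j = (if i = j then 1 else 0)"
  shows "spectral_matrix \<alpha> v ** spectral_matrix \<beta> v = spectral_matrix (\<lambda>i. \<alpha> i * \<beta> i) v"
proof -
  have "(spectral_matrix \<alpha> v ** spectral_matrix \<beta> v) $ a $ b
      = spectral_matrix (\<lambda>i. \<alpha> i * \<beta> i) v $ a $ b" for a b
  proof -
    have "(spectral_matrix \<alpha> v ** spectral_matrix \<beta> v) $ a $ b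
        = (\<Sum>c\<in>UNIV. (\<Sum>i\<in>UNIV. \<alpha> i * of_real (v i $ a * v i $ c))
            * (\<Sum>k\<in>UNIV. \<beta> k * of_real (v k $ c * v k $ b)))"
      by (simp only: spectral_matrix_def matrix_matrix_mult_def vec_lambda_beta)
    also have "\<dots> = (\<Sum>i\<in>UNIV. \<Sum>k\<in>UNIV. \<Sum>c\<in>UNIV.
        \<alpha> i * of_real (v i $ a * v i $ c) * (\<beta> k * of_real (v k $ c * v k $ b)))"
      by (rule sum_mult_sum_swap)
    also have "\<dots> = (\<Sum>i\<in>UNIV. \<Sum>k\<in>UNIV. \<alpha> i * \<beta> k * of_real (v i $ a * v k $ b * (v i \<bullet> v k)))"
      by (simp add: inner_vec_def sum_distrib_left mult_ac)
    also have "\<dots> = spectral_matrix (\<lambda>i. \<alpha> i * \<beta> i) v $ a $ b"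
      by (simp add: orth spectral_matrix_def if_distrib[of complex_of_real] if_distrib[of "(*) x" for x] cong: if_cong)
    finally show ?thesis .
  qed
  then show ?thesis
    by (simp add: vec_eq_iff)
qed

lemma cmat_spectral_decomposition:
  fixes v :: "'n::finite \<Rightarrow> real^'n"
  assumes dec: "A = (\<Sum>i\<in>UNIV. lam i *\<^sub>R outer (v i) (v i))"
  shows "cmat A = spectral_matrix (\<lambda>i. complex_of_real (lam i)) v"
  using dec by (simp add: cmat_def spectral_matrix_def outer_def sum_component vec_eq_iff mult_ac)

lemma matrix_inv_eqI:
  fixes M R :: "'a::field^'n^'n"
  assumes "M ** R = mat 1"
  shows "matrix_inv M = R"
proof -
  have "R ** M = mat 1"
    using assms by (simp add: matrix_left_right_inverse)
  then have left_inverse: "matrix_inv M ** M = mat 1"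
    unfolding matrix_inv_def using assms by (metis (mono_tags, lifting) someI)
  have "matrix_inv M = (matrix_inv M ** M) ** R"
    using assms by (simp flip: matrix_mul_assoc)
  then show ?thesis
    using left_inverse by simp
qed

lemma resolvent_spectral:
  fixes v :: "'n::finite \<Rightarrow> real^'n"
  assumes orth: "\<And>i j. v i \<bullet> v j = (if i = j then 1 else 0)"
    and dec: "A = (\<Sum>i\<in>UNIV. lam i *\<^sub>R outer (v i) (v i))"
    and not_eigenvalue: "\<And>i. complex_of_real (lam i) \<noteq> z"
  shows "resolvent A z = spectral_matrix (\<lambda>i. 1 / (complex_of_real (lam i) - z)) v"
proof -
  have "cmat A - mat z = spectral_matrix (\<lambda>i. complex_of_real (lam i) - z) v"
    by (simp add: cmat_spectral_decomposition[OF dec] flip: spectral_matrix_const[OF orth] spectral_matrix_diff)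
  then have "(cmat A - mat z) ** spectral_matrix (\<lambda>i. 1 / (complex_of_real (lam i) - z)) v = mat 1"
    using not_eigenvalue by (simp add: spectral_matrix_mult[OF orth] flip: spectral_matrix_const[OF orth])
  then show ?thesis
    unfolding resolvent_def by (rule matrix_inv_eqI)
qed

lemma cmat_onesM: "cmat onesM = onesM"
  by (simp add: cmat_def onesM_def)

lemma spectral_matrix_sandwich:
  fixes v w :: "'n::finite \<Rightarrow> real^'n"
  shows "(spectral_matrix \<alpha> v ** cmat M ** spectral_matrix \<beta> w) $ a $ b
    = (\<Sum>i\<in>UNIV. \<Sum>j\<in>UNIV. \<alpha> i * \<beta> j * of_real ((outer (v i) (v i) ** M ** outer (w j) (w j)) $ a $ b))"
proof -
  have left: "(spectral_matrix \<alpha> v ** cmat M) $ a $ d = (\<Sum>i\<in>UNIV. \<alpha> i * of_real ((outer (v i) (v i) ** M) $ a $ d))"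
    for d
  proof -
    have "(spectral_matrix \<alpha> v ** cmat M) $ a $ d
        = (\<Sum>c\<in>UNIV. (\<Sum>i\<in>UNIV. \<alpha> i * of_real (v i $ a * v i $ c)) * of_real (M $ c $ d))"
      by (simp only: spectral_matrix_def cmat_def matrix_matrix_mult_def vec_lambda_beta)
    also have "\<dots> = (\<Sum>i\<in>UNIV. \<Sum>c\<in>UNIV. \<alpha> i * of_real (v i $ a * v i $ c) * of_real (M $ c $ d))"
      by (rule sum_mult_swap)
    also have "\<dots> = (\<Sum>i\<in>UNIV. \<alpha> i * of_real ((outer (v i) (v i) ** M) $ a $ d))"
      by (simp add: outer_def matrix_matrix_mult_def sum_distrib_left mult_ac)
    finally show ?thesis .
  qed
  have "(spectral_matrix \<alpha> v ** cmat M ** spectral_matrix \<beta> w) $ a $ b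
      = (\<Sum>d\<in>UNIV. (\<Sum>i\<in>UNIV. \<alpha> i * of_real ((outer (v i) (v i) ** M) $ a $ d))
          * (\<Sum>j\<in>UNIV. \<beta> j * of_real (w j $ d * w j $ b)))"
    unfolding matrix_matrix_mult_def[of "spectral_matrix \<alpha> v ** cmat M"] vec_lambda_beta left
    by (simp only: spectral_matrix_def vec_lambda_beta)
  also have "\<dots> = (\<Sum>i\<in>UNIV. \<Sum>j\<in>UNIV. \<Sum>d\<in>UNIV.
      \<alpha> i * of_real ((outer (v i) (v i) ** M) $ a $ d) * (\<beta> j * of_real (w j $ d * w j $ b)))"
    by (rule sum_mult_sum_swap)
  also have "\<dots> = (\<Sum>i\<in>UNIV. \<Sum>j\<in>UNIV. \<alpha> i * \<beta> j * of_real ((outer (v i) (v i) ** M ** outer (w j) (w j)) $ a $ b))"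
    by (simp add: outer_def matrix_matrix_mult_def sum_distrib_left mult_ac)
  finally show ?thesis .
qed

lemma resolvent_ones_resolvent_entry:
  fixes v w :: "'n::finite \<Rightarrow> real^'n"
  assumes v_orth: "\<And>i j. v i \<bullet> v j = (if i = j then 1 else 0)"
    and w_orth: "\<And>i j. w i \<bullet> w j = (if i = j then 1 else 0)"
    and A_dec: "A = (\<Sum>i\<in>UNIV. lam i *\<^sub>R outer (v i) (v i))"
    and B_dec: "B = (\<Sum>j\<in>UNIV. mu j *\<^sub>R outer (w j) (w j))"
    and lam_ne: "\<And>i. complex_of_real (lam i) \<noteq> z" and mu_ne: "\<And>j. complex_of_real (mu j) \<noteq> z'"
  shows "(resolvent A z ** onesM ** resolvent B z') $ a $ b
    = (\<Sum>i\<in>UNIV. \<Sum>j\<in>UNIV. 1 / (complex_of_real (lam i) - z) * (1 / (complex_of_real (mu j) - z'))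
        * of_real ((outer (v i) (v i) ** onesM ** outer (w j) (w j)) $ a $ b))"
  by (simp only: resolvent_spectral[OF v_orth A_dec lam_ne] resolvent_spectral[OF w_orth B_dec mu_ne]
      spectral_matrix_sandwich flip: cmat_onesM)

lemma spectral_decomposition_eigenvector:
  fixes v :: "'n::finite \<Rightarrow> real^'n"
  assumes orth: "\<And>i j. v i \<bullet> v j = (if i = j then 1 else 0)"
    and dec: "A = (\<Sum>i\<in>UNIV. lam i *\<^sub>R outer (v i) (v i))"
  shows "A *v v k = lam k *\<^sub>R v k"
proof -
  have "(A *v v k) $ a = lam k * v k $ a" for a
  proof -
    have "(A *v v k) $ a = (\<Sum>c\<in>UNIV. (\<Sum>i\<in>UNIV. lam i * v i $ a * v i $ c) * v k $ c)"
      using dec by (simp add: matrix_vector_mult_def outer_def mult.assoc)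
    also have "\<dots> = (\<Sum>i\<in>UNIV. \<Sum>c\<in>UNIV. lam i * v i $ a * v i $ c * v k $ c)"
      by (rule sum_mult_swap)
    also have "\<dots> = (\<Sum>i\<in>UNIV. lam i * v i $ a * (v i \<bullet> v k))"
      by (simp add: inner_vec_def sum_distrib_left mult.assoc)
    also have "\<dots> = lam k * v k $ a"
      by (simp add: orth if_distrib[of "(*) x" for x] cong: if_cong)
    finally show ?thesis .
  qed
  then show ?thesis
    by (simp add: vec_eq_iff)
qed

lemma abs_eigenvalue_le_onorm:
  fixes A :: "real^'n^'n"
  assumes eigen: "A *v u = c *\<^sub>R u" and "u \<noteq> 0"
  shows "\<bar>c\<bar> \<le> onorm ((*v) A)"
proof -
  have "\<bar>c\<bar> * norm u \<le> onorm ((*v) A) * norm u"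
    using onorm[OF matrix_vector_mul_bounded_linear, of A u] eigen by simp
  then show ?thesis
    using \<open>u \<noteq> 0\<close> by simp
qed

lemma spectral_decomposition_abs_eigenvalue_le_onorm:
  fixes v :: "'n::finite \<Rightarrow> real^'n"
  assumes orth: "\<And>i j. v i \<bullet> v j = (if i = j then 1 else 0)"
    and dec: "A = (\<Sum>i\<in>UNIV. lam i *\<^sub>R outer (v i) (v i))"
  shows "\<bar>lam k\<bar> \<le> onorm ((*v) A)"
proof (rule abs_eigenvalue_le_onorm)
  show "A *v v k = lam k *\<^sub>R v k"
    by (rule spectral_decomposition_eigenvector[OF orth dec])
  show "v k \<noteq> 0"
    using orth[of k k] by auto
qed

lemma has_contour_integral_rectpath_two_poles:
  assumes z: "z \<in> box a1 a3" and c: "Im c < Im a1"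
  shows "((\<lambda>w. 1 / ((w - z) * (w - c))) has_contour_integral 2 * pi * \<i> / (z - c)) (rectpath a1 a3)"
proof -
  define S where "S = {w. Im w > Im c}"
  have "Re a1 < Re a3" "Im a1 < Im a3"
    using z by (auto simp: in_box_complex_iff)
  then have image: "path_image (rectpath a1 a3) = cbox a1 a3 - box a1 a3"
    by (simp add: path_image_rectpath_cbox_minus_box)
  have cbox_S: "cbox a1 a3 \<subseteq> S"
    using c by (auto simp: S_def in_cbox_complex_iff)
  have "z \<in> interior S"
    using z cbox_S box_subset_cbox open_halfspace_Im_gt by (auto simp: S_def interior_open)
  moreover have "(\<lambda>w. 1 / (w - c)) holomorphic_on S"
    by (auto simp: S_def intro!: holomorphic_intros)
  ultimately have "((\<lambda>w. 1 / (w - c) / (w - z)) has_contour_integral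
      2 * pi * \<i> * winding_number (rectpath a1 a3) z * (1 / (z - c))) (rectpath a1 a3)"
    using image cbox_S z convex_halfspace_Im_gt[of "Im c"] unfolding S_def
    by (intro Cauchy_integral_formula_convex_simple) auto
  then show ?thesis
    using winding_number_rectpath[OF z] by (simp add: mult.commute)
qed

lemma has_contour_integral_quadrilateral_rotate:
  assumes "(f has_contour_integral I) (linepath a b +++ linepath b c +++ linepath c d +++ linepath d a)"
  shows "(f has_contour_integral I) (linepath b c +++ linepath c d +++ linepath d a +++ linepath a b)"
proof -
  have "f contour_integrable_on (linepath a b +++ linepath b c +++ linepath c d +++ linepath d a)"
    using assms by (auto simp: contour_integrable_on_def)
  then have "f contour_integrable_on linepath a b" "f contour_integrable_on linepath b c"
    "f contour_integrable_on linepath c d" "f contour_integrable_on linepath d a"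
    by simp_all
  then have "f contour_integrable_on (linepath b c +++ linepath c d +++ linepath d a +++ linepath a b)"
    and "contour_integral (linepath b c +++ linepath c d +++ linepath d a +++ linepath a b) f = I"
    using contour_integral_unique[OF assms] by (simp_all add: ac_simps)
  then show ?thesis
    by (metis has_contour_integral_integral)
qed

text \<open>\<open>rect_contour\<close> runs around the same rectangle as \<open>rectpath\<close>, but starts at the lower right corner.\<close>

lemma has_contour_integral_rect_contour:
  assumes "(f has_contour_integral I) (rectpath (Complex (-3) (-eta/2)) (Complex 3 (eta/2)))"
  shows "(f has_contour_integral I) (rect_contour eta)"
  unfolding rect_contour_def
  by (rule has_contour_integral_quadrilateral_rotate) (use assms in \<open>simp add: rectpath_def Let_def\<close>)

lemma path_image_rect_contour:
  "path_image (rect_contour eta) = path_image (rectpath (Complex (-3) (-eta/2)) (Complex 3 (eta/2)))"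
  by (auto simp: rect_contour_def rectpath_def Let_def path_image_join)

lemma rect_contour_avoids_poles:
  assumes "eta > 0" "\<bar>lam\<bar> < 3" "z \<in> path_image (rect_contour eta)"
  shows "complex_of_real lam \<noteq> z" "complex_of_real mu \<noteq> z + \<i> * complex_of_real eta"
proof -
  have "z \<in> cbox (Complex (-3) (-eta/2)) (Complex 3 (eta/2)) - box (Complex (-3) (-eta/2)) (Complex 3 (eta/2))"
    using assms by (simp add: path_image_rect_contour path_image_rectpath_cbox_minus_box)
  then show "complex_of_real lam \<noteq> z" "complex_of_real mu \<noteq> z + \<i> * complex_of_real eta"
    using assms by (auto simp: in_box_complex_iff in_cbox_complex_iff complex_eq_iff)
qed

lemma has_contour_integral_rect_contour_resolvents:
  assumes "\<bar>lam\<bar> < 3" "eta > 0"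
  shows "((\<lambda>z. 1 / (complex_of_real lam - z) * (1 / (complex_of_real mu - (z + \<i> * complex_of_real eta))))
          has_contour_integral 2 * pi * \<i> / (complex_of_real (lam - mu) + \<i> * complex_of_real eta))
         (rect_contour eta)"
proof -
  let ?c = "complex_of_real mu - \<i> * complex_of_real eta"
  have "((\<lambda>z. 1 / ((z - complex_of_real lam) * (z - ?c))) has_contour_integral
      2 * pi * \<i> / (complex_of_real lam - ?c)) (rect_contour eta)"
    using assms
    by (intro has_contour_integral_rect_contour has_contour_integral_rectpath_two_poles)
       (auto simp: in_box_complex_iff)
  moreover have "(complex_of_real lam - z) * (complex_of_real mu - (z + \<i> * complex_of_real eta))
      = (z - complex_of_real lam) * (z - ?c)" for z
    by (simp add: algebra_simps)
  moreover have "complex_of_real lam - ?c = complex_of_real (lam - mu) + \<i> * complex_of_real eta"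
    by simp
  ultimately show ?thesis
    by (simp add: divide_inverse_commute flip: inverse_mult_distrib)
qed

lemma Re_two_pi_i_div:
  "Re (2 * pi * \<i> / (complex_of_real x + \<i> * complex_of_real e) * complex_of_real k)
    = 2 * pi * e / (x\<^sup>2 + e\<^sup>2) * k"
  by (simp add: Re_divide power2_eq_square)

theorem proposition3p2:
  fixes A B :: "real^'n^'n" and lam mu :: "'n \<Rightarrow> real"
    and v w :: "'n \<Rightarrow> real^'n" and eta :: real
  assumes symA: "transpose A = A" and symB: "transpose B = B"
    and v_orth: "\<And>i j. v i \<bullet> v j = (if i = j then 1 else 0)"
    and w_orth: "\<And>i j. w i \<bullet> w j = (if i = j then 1 else 0)"
    and A_dec: "A = (\<Sum>i\<in>UNIV. lam i *\<^sub>R outer (v i) (v i))"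
    and B_dec: "B = (\<Sum>j\<in>UNIV. mu j *\<^sub>R outer (w j) (w j))"
    and normA: "onorm (\<lambda>x. A *v x) \<le> 2.5"
    and eta_pos: "eta > 0"
  shows "(\<Sum>i\<in>UNIV. \<Sum>j\<in>UNIV.
            (eta / ((lam i - mu j)\<^sup>2 + eta\<^sup>2)) *\<^sub>R
              (outer (v i) (v i) ** onesM ** outer (w j) (w j)))
         = (1 / (2 * pi)) *\<^sub>R
           (\<chi> a b. Re (contour_integral (rect_contour eta)
              (\<lambda>z. (resolvent A z ** onesM ** resolvent B (z + \<i> * complex_of_real eta)) $ a $ b)))"
proof -
  define K where "K i j = outer (v i) (v i) ** onesM ** outer (w j) (w j)" for i j
  let ?entry = "\<lambda>a b z. (resolvent A z ** onesM ** resolvent B (z + \<i> * complex_of_real eta)) $ a $ b"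
  have lam_bound: "\<bar>lam i\<bar> < 3" for i
    using spectral_decomposition_abs_eigenvalue_le_onorm[OF v_orth A_dec, of i] normA by linarith
  have integrand: "?entry a b z = (\<Sum>i\<in>UNIV. \<Sum>j\<in>UNIV. 1 / (complex_of_real (lam i) - z)
      * (1 / (complex_of_real (mu j) - (z + \<i> * complex_of_real eta))) * complex_of_real (K i j $ a $ b))"
    if "z \<in> path_image (rect_contour eta)" for a b z
    unfolding K_def using rect_contour_avoids_poles[OF eta_pos lam_bound that]
    by (intro resolvent_ones_resolvent_entry[OF v_orth w_orth A_dec B_dec]) auto
  have contour: "(?entry a b has_contour_integral (\<Sum>i\<in>UNIV. \<Sum>j\<in>UNIV.
      2 * pi * \<i> / (complex_of_real (lam i - mu j) + \<i> * complex_of_real eta) * complex_of_real (K i j $ a $ b)))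
      (rect_contour eta)" for a b
    by (rule has_contour_integral_eq[OF _ integrand[symmetric]])
       (intro has_contour_integral_sum has_contour_integral_rmul has_contour_integral_rect_contour_resolvents
         lam_bound eta_pos finite)
  have "Re (contour_integral (rect_contour eta) (?entry a b))
      = 2 * pi * (\<Sum>i\<in>UNIV. \<Sum>j\<in>UNIV. eta / ((lam i - mu j)\<^sup>2 + eta\<^sup>2) * K i j $ a $ b)" for a b
    by (simp only: contour_integral_unique[OF contour] Re_sum Re_two_pi_i_div) (simp add: sum_distrib_left mult.assoc)
  then show ?thesis
    by (simp add: vec_eq_iff K_def)
qed

end
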